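(* Let $\mathbb{P}_{\omega^*}$ be a canonical form whose dimension-reduced form $\mathbb{P}_{\omega^{**}}$ is regular (i.e. $m_0=0$, or $m_0>0$ and $\varepsilon>0$). Then: (1) if $\mathbb{P}_{\omega^{**}}$ has a unique solution, so does $\mathbb{P}_{\omega^*}$. (2) $\mathbb{P}_{\omega^{**}}$ does not have a unique solution if and only if it is singly-Lagrangian and either (a) $f_1<0$ and $\delta_1=0$, in which case its solutions are unique up to the sign of $\hat z_1\neq0$, and the solutions of $\mathbb{P}_{\omega^*}$ are unique up to replacing $\hat x_1$ by any vector of the same norm; or (b) $\gamma_q<0$, $f_q>0$ and $\delta_q=0$, in which case its solutions are unique up to the sign of $\hat z_q\neq0$, and the solutions of $\mathbb{P}_{\omega^*}$ are unique up to replacing $\hat x_q$ by any vector of the same norm.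
   Context: Canonical form: integers $q\ge1$, $m_0\ge0$, $m_1,\dots,m_q\ge1$, $n=\sum m_i$; reals $\gamma_1>\dots>\gamma_q$ nonzero with $\gamma_1>0$; $\delta_i\ge0$; $\varepsilon\ge0$ ($\varepsilon=0$ if $m_0=0$); $k^*\in\mathbb{R}$; $u_m=(1,0,\dots,0)^\top\in\mathbb{R}^m$. $\mathbb{P}_{\omega^*}$: minimise $\|x-t^*\|^2$ subject to $x^\top B^*x+2b^{*\top}x-k^*=0$ (feasible set nonempty), $B^*=\operatorname{diag}(O_{m_0},\gamma_1I_{m_1},\dots,\gamma_qI_{m_q})$, $t^*=(0_{m_0}^\top,\delta_1u_{m_1}^\top,\dots,\delta_qu_{m_q}^\top)^\top$, $b^*=(\varepsilon u_{m_0}^\top,0^\top,\dots,0^\top)^\top$, $x=(x_0^\top,x_1^\top,\dots,x_q^\top)^\top$, $x_i\in\mathbb{R}^{m_i}$. Dimension-reduced form $\mathbb{P}_{\omega^{**}}$: $\Gamma^*=\operatorname{diag}(\gamma_1,\dots,\gamma_q)$; if $m_0>0$, $w=(y,z^\top)^\top\in\mathbb{R}^{q+1}$, $w_0=(0,\delta^\top)^\top$, $\Delta=\operatorname{diag}(0,\Gamma^* )$, $d=\varepsilon e_1$; if $m_0=0$, $w=z\in\mathbb{R}^q$, $w_0=\delta$, $\Delta=\Gamma^*$, $d=0$; minimise $\|w-w_0\|^2$ subject to $w^\top\Delta w+2d^\top w-k^*=0$; solutions written $\hat w=(\hat y,\hat z_1,\dots,\hat z_q)$. Boundary quantities: $f_1=\sum_{i=2}^q\gamma_i\big((1-\gamma_i/\gamma_1)^{-1}\delta_i\big)^2+2\varepsilon^2\gamma_1^{-1}-k^*$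 and, when $\gamma_q<0$, $f_q=\sum_{i=1}^{q-1}\gamma_i\big((1-\gamma_i/\gamma_q)^{-1}\delta_i\big)^2+2\varepsilon^2\gamma_q^{-1}-k^*$. $\mathbb{P}_{\omega^{**}}$ is non-Lagrangian if $m_0=0$, $k^*=0$, $\delta\neq0$ and $\gamma_q>0$; multiply-Lagrangian if $m_0=0$, $k^*=0$, $\delta=0$; singly-Lagrangian otherwise. *)

theory Defs
  imports Complex_Main
begin

(* Vectors of R^n, n = m 0 + ... + m q, in block form: x i j is the j-th
   component (j < m i) of block x_i (i = 0..q); zero outside the carrier. *)
definition orig_vec :: "nat \<Rightarrow> (nat \<Rightarrow> nat) \<Rightarrow> (nat \<Rightarrow> nat \<Rightarrow> real) \<Rightarrow> bool" where
  "orig_vec q m x \<longleftrightarrow> (\<forall>i j. (q < i \<or> m i \<le> j) \<longrightarrow> x i j = 0)"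

definition tstar :: "(nat \<Rightarrow> real) \<Rightarrow> nat \<Rightarrow> nat \<Rightarrow> real" where
  "tstar \<delta> i j = (if 1 \<le> i \<and> j = 0 then \<delta> i else 0)"

definition orig_obj :: "nat \<Rightarrow> (nat \<Rightarrow> nat) \<Rightarrow> (nat \<Rightarrow> real) \<Rightarrow> (nat \<Rightarrow> nat \<Rightarrow> real) \<Rightarrow> real" where
  "orig_obj q m \<delta> x = (\<Sum>i\<le>q. \<Sum>j<m i. (x i j - tstar \<delta> i j)^2)"

(* x^T B^* x + 2 b^{*T} x - k^*  (b^* = eps u_{m0}; x 0 0 = 0 if m 0 = 0) *)
definition orig_con :: "nat \<Rightarrow> (nat \<Rightarrow> nat) \<Rightarrow> (nat \<Rightarrow> real) \<Rightarrow> real \<Rightarrow> real \<Rightarrow> (nat \<Rightarrow> nat \<Rightarrow> real) \<Rightarrow> real" where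
  "orig_con q m \<gamma> \<epsilon> k x = (\<Sum>i=1..q. \<gamma> i * (\<Sum>j<m i. (x i j)^2)) + 2 * \<epsilon> * x 0 0 - k"

definition orig_feasible where
  "orig_feasible q m \<gamma> \<epsilon> k x \<longleftrightarrow> orig_vec q m x \<and> orig_con q m \<gamma> \<epsilon> k x = 0"

definition orig_sol where
  "orig_sol q m \<gamma> \<delta> \<epsilon> k x \<longleftrightarrow> orig_feasible q m \<gamma> \<epsilon> k x \<and>
     (\<forall>y. orig_feasible q m \<gamma> \<epsilon> k y \<longrightarrow> orig_obj q m \<delta> x \<le> orig_obj q m \<delta> y)"

(* Reduced vectors w = (y, z_1, ..., z_q): w 0 = y (only if m 0 > 0), w i = z_i.
   If m 0 = 0 then w 0 = 0 (w lives in R^q). *)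
definition red_vec :: "nat \<Rightarrow> nat \<Rightarrow> (nat \<Rightarrow> real) \<Rightarrow> bool" where
  "red_vec q m0 w \<longleftrightarrow> (\<forall>i. (q < i \<or> (i = 0 \<and> m0 = 0)) \<longrightarrow> w i = 0)"

definition red_obj :: "nat \<Rightarrow> (nat \<Rightarrow> real) \<Rightarrow> (nat \<Rightarrow> real) \<Rightarrow> real" where
  "red_obj q \<delta> w = (w 0)^2 + (\<Sum>i=1..q. (w i - \<delta> i)^2)"

definition red_con :: "nat \<Rightarrow> (nat \<Rightarrow> real) \<Rightarrow> real \<Rightarrow> real \<Rightarrow> (nat \<Rightarrow> real) \<Rightarrow> real" where
  "red_con q \<gamma> \<epsilon> k w = (\<Sum>i=1..q. \<gamma> i * (w i)^2) + 2 * \<epsilon> * w 0 - k"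

definition red_feasible where
  "red_feasible q m0 \<gamma> \<epsilon> k w \<longleftrightarrow> red_vec q m0 w \<and> red_con q \<gamma> \<epsilon> k w = 0"

definition red_sol where
  "red_sol q m0 \<gamma> \<delta> \<epsilon> k w \<longleftrightarrow> red_feasible q m0 \<gamma> \<epsilon> k w \<and>
     (\<forall>v. red_feasible q m0 \<gamma> \<epsilon> k v \<longrightarrow> red_obj q \<delta> w \<le> red_obj q \<delta> v)"

definition canonical_form where
  "canonical_form q m \<gamma> \<delta> \<epsilon> k \<longleftrightarrow>
     1 \<le> q \<and> (\<forall>i\<in>{1..q}. 1 \<le> m i) \<and>
     (\<forall>i\<in>{1..q}. \<gamma> i \<noteq> 0) \<and> (\<forall>i j. 1 \<le> i \<and> i < j \<and> j \<le> q \<longrightarrow> \<gamma> j < \<gamma> i) \<and>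
     0 < \<gamma> 1 \<and> (\<forall>i\<in>{1..q}. 0 \<le> \<delta> i) \<and> 0 \<le> \<epsilon> \<and> (m 0 = 0 \<longrightarrow> \<epsilon> = 0) \<and>
     (\<exists>x. orig_feasible q m \<gamma> \<epsilon> k x)"

definition regular where
  "regular m0 \<epsilon> \<longleftrightarrow> m0 = 0 \<or> (0 < m0 \<and> 0 < \<epsilon>)"

definition non_lagrangian where
  "non_lagrangian q m0 \<gamma> \<delta> (k::real) \<longleftrightarrow>
     m0 = 0 \<and> k = 0 \<and> (\<exists>i\<in>{1..q}. \<delta> i \<noteq> 0) \<and> 0 < \<gamma> q"

definition multiply_lagrangian where
  "multiply_lagrangian q m0 (\<delta>::nat\<Rightarrow>real) (k::real) \<longleftrightarrow>
     m0 = 0 \<and> k = 0 \<and> (\<forall>i\<in>{1..q}. \<delta> i = 0)"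

definition singly_lagrangian where
  "singly_lagrangian q m0 \<gamma> \<delta> k \<longleftrightarrow>
     \<not> non_lagrangian q m0 \<gamma> \<delta> k \<and> \<not> multiply_lagrangian q m0 \<delta> k"

definition f1 :: "nat \<Rightarrow> (nat \<Rightarrow> real) \<Rightarrow> (nat \<Rightarrow> real) \<Rightarrow> real \<Rightarrow> real \<Rightarrow> real" where
  "f1 q \<gamma> \<delta> \<epsilon> k = (\<Sum>i=2..q. \<gamma> i * (inverse (1 - \<gamma> i / \<gamma> 1) * \<delta> i)^2)
      + 2 * \<epsilon>^2 * inverse (\<gamma> 1) - k"

definition fq :: "nat \<Rightarrow> (nat \<Rightarrow> real) \<Rightarrow> (nat \<Rightarrow> real) \<Rightarrow> real \<Rightarrow> real \<Rightarrow> real" where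
  "fq q \<gamma> \<delta> \<epsilon> k = (\<Sum>i=1..q-1. \<gamma> i * (inverse (1 - \<gamma> i / \<gamma> q) * \<delta> i)^2)
      + 2 * \<epsilon>^2 * inverse (\<gamma> q) - k"

definition red_unique_up_to_sign where
  "red_unique_up_to_sign q m0 \<gamma> \<delta> \<epsilon> k p \<longleftrightarrow>
     (\<exists>w. red_sol q m0 \<gamma> \<delta> \<epsilon> k w \<and> w p \<noteq> 0 \<and>
          {v. red_sol q m0 \<gamma> \<delta> \<epsilon> k v} = {w, w(p := - w p)})"

definition orig_unique_up_to_block where
  "orig_unique_up_to_block q m \<gamma> \<delta> \<epsilon> k p \<longleftrightarrow>
     (\<exists>x. orig_sol q m \<gamma> \<delta> \<epsilon> k x \<and>
          {y. orig_sol q m \<gamma> \<delta> \<epsilon> k y} =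
          {y. orig_vec q m y \<and> (\<forall>i j. i \<noteq> p \<longrightarrow> y i j = x i j) \<and>
              (\<Sum>j<m p. (y p j)^2) = (\<Sum>j<m p. (x p j)^2)})"

end

theory Submission
  imports Defs
begin

text \<open>
  Replacing each block \<open>x\<^sub>i\<close> (\<open>i \<ge> 1\<close>) by its norm and \<open>x\<^sub>0\<close> by its first coordinate maps
  the original problem onto the reduced one: the constraint is preserved, the objective does not
  increase (\<open>\<langle>x\<^sub>i, u\<rangle> \<le> \<parallel>x\<^sub>i\<parallel>\<close>), and it stays equal only on the embedded copy, except in
  blocks with \<open>\<delta>\<^sub>i = 0\<close> where any vector of the same norm does as well. Hence uniqueness and
  uniqueness up to the sign of \<open>z\<^sub>p\<close> transfer to the original problem.

  For the reduced problem, a feasible point that is stationary for the Lagrangian with a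
  multiplier \<open>l\<close> such that all \<open>1 - l\<gamma>\<^sub>i \<ge> 0\<close> is a global minimiser, since the objective
  differs from its value there by a positive semidefinite quadratic form; it is the unique
  one when all \<open>1 - l\<gamma>\<^sub>i > 0\<close>. Such an \<open>l\<close> is a root of the secular function on the interval
  \<open>(1/\<gamma>\<^sub>q, 1/\<gamma>\<^sub>1)\<close> (left end \<open>-\<infinity>\<close> if \<open>\<gamma>\<^sub>q > 0\<close>), found by the intermediate value theorem
  from its behaviour at the ends. This fails exactly when \<open>\<delta>\<^sub>1 = 0\<close> and \<open>f\<^sub>1 < 0\<close>, or
  \<open>\<gamma>\<^sub>q < 0\<close>, \<open>\<delta>\<^sub>q = 0\<close> and \<open>f\<^sub>q > 0\<close>; then the multiplier sits at the pole \<open>1/\<gamma>\<^sub>p\<close>, and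
  the free coordinate \<open>z\<^sub>p\<close> is determined by the constraint only up to sign.
\<close>

lemma filterlim_pos_mult_inverse_add_at_top:
  fixes h g :: "'a \<Rightarrow> real"
  assumes "filterlim h (at_right 0) F" "(g \<longlongrightarrow> L) F" "0 < A"
  shows "filterlim (\<lambda>x. A * inverse (h x) + g x) at_top F"
proof -
  have "filterlim (\<lambda>x. inverse (h x)) at_top F"
    using filterlim_compose[OF filterlim_inverse_at_top_right assms(1)] .
  then have "filterlim (\<lambda>x. A * inverse (h x)) at_top F"
    using filterlim_tendsto_pos_mult_at_top[OF tendsto_const assms(3)] by blast
  then show ?thesis
    using filterlim_tendsto_add_at_top[OF assms(2)] add.commute[of "g _"] by auto
qed

lemma sum_lessThan_eq_first:
  fixes f :: "nat \<Rightarrow> real"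
  assumes "0 < M" "\<And>j. j \<noteq> 0 \<Longrightarrow> f j = 0"
  shows "(\<Sum>j<M. f j) = f 0"
proof -
  have "(\<Sum>j<M. f j) = f 0 + (\<Sum>j\<in>{..<M} - {0}. f j)"
    using assms(1) by (subst sum.remove[of _ 0]) auto
  also have "(\<Sum>j\<in>{..<M} - {0}. f j) = 0"
    using assms(2) by (intro sum.neutral) auto
  finally show ?thesis by simp
qed

lemma sum_sq_diff_first:
  fixes y :: "nat \<Rightarrow> real"
  assumes "0 < M"
  shows "(\<Sum>j<M. (y j - (if j = 0 then d else 0))\<^sup>2) = (\<Sum>j<M. (y j)\<^sup>2) - 2 * d * y 0 + d\<^sup>2"
proof -
  have "(\<Sum>j<M. (y j - (if j = 0 then d else 0))\<^sup>2)
      = (\<Sum>j<M. (y j)\<^sup>2) + (\<Sum>j<M. if j = 0 then d\<^sup>2 - 2 * d * y 0 else 0)"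
    by (subst sum.distrib[symmetric], rule sum.cong) (auto simp: power2_eq_square algebra_simps)
  also have "(\<Sum>j<M. if j = 0 then d\<^sup>2 - 2 * d * y 0 else 0) = d\<^sup>2 - 2 * d * y 0"
    using sum_lessThan_eq_first[OF assms, of "\<lambda>j. if j = 0 then d\<^sup>2 - 2 * d * y 0 else 0"] by simp
  finally show ?thesis by simp
qed

lemma sum_sq_eq_first_sq_imp_zero:
  fixes y :: "nat \<Rightarrow> real"
  assumes "0 < M" "(\<Sum>j<M. (y j)\<^sup>2) = (y 0)\<^sup>2" "j < M" "j \<noteq> 0"
  shows "y j = 0"
proof -
  have "(\<Sum>j<M. (y j)\<^sup>2) = (y 0)\<^sup>2 + (\<Sum>j\<in>{..<M} - {0}. (y j)\<^sup>2)"
    using assms(1) by (subst sum.remove[of _ 0]) auto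
  then have "(\<Sum>j\<in>{..<M} - {0}. (y j)\<^sup>2) = 0" using assms(2) by simp
  then show ?thesis using assms(3,4) by (subst (asm) sum_nonneg_eq_0_iff) auto
qed

lemma sum_sq_diff_first_ge:
  fixes y :: "nat \<Rightarrow> real"
  assumes "0 < M" "0 \<le> d"
  shows "(sqrt (\<Sum>j<M. (y j)\<^sup>2) - d)\<^sup>2 \<le> (\<Sum>j<M. (y j - (if j = 0 then d else 0))\<^sup>2)"
proof -
  define S where "S = (\<Sum>j<M. (y j)\<^sup>2)"
  have "S \<ge> 0" unfolding S_def by (simp add: sum_nonneg)
  have "(y 0)\<^sup>2 \<le> S" unfolding S_def using assms(1) by (intro member_le_sum) auto
  then have "y 0 \<le> sqrt S" using real_le_rsqrt by fastforce
  then have "d * y 0 \<le> d * sqrt S" using assms(2) by (rule mult_left_mono)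
  moreover have "(sqrt S - d)\<^sup>2 = S - 2 * d * sqrt S + d\<^sup>2"
    using \<open>S \<ge> 0\<close> by (simp add: power2_diff)
  ultimately show ?thesis
    using sum_sq_diff_first[OF assms(1), of y d] unfolding S_def[symmetric] by linarith
qed

lemma sum_sq_diff_first_eq_imp:
  fixes y :: "nat \<Rightarrow> real"
  assumes "0 < M" "0 < d" "j < M"
    and "(\<Sum>j<M. (y j - (if j = 0 then d else 0))\<^sup>2) = (sqrt (\<Sum>j<M. (y j)\<^sup>2) - d)\<^sup>2"
  shows "y j = (if j = 0 then sqrt (\<Sum>j<M. (y j)\<^sup>2) else 0)"
proof -
  define S where "S = (\<Sum>j<M. (y j)\<^sup>2)"
  have "S \<ge> 0" unfolding S_def by (simp add: sum_nonneg)
  then have "(sqrt S - d)\<^sup>2 = S - 2 * d * sqrt S + d\<^sup>2" by (simp add: power2_diff)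
  then have "d * y 0 = d * sqrt S"
    using assms(4) sum_sq_diff_first[OF assms(1), of y d] unfolding S_def[symmetric] by linarith
  then have y0: "y 0 = sqrt S" using assms(2) by simp
  then have "(\<Sum>j<M. (y j)\<^sup>2) = (y 0)\<^sup>2" using \<open>S \<ge> 0\<close> unfolding S_def by simp
  then show ?thesis
    using y0 sum_sq_eq_first_sq_imp_zero[OF assms(1) _ assms(3)] unfolding S_def by auto
qed

lemma pos_mult_sq_div_le:
  fixes g l d :: real
  assumes "0 < g" "l < 0"
  shows "g * (d / (1 - l * g))\<^sup>2 \<le> d\<^sup>2 / (- l)"
proof -
  define t where "t = 1 - l * g"
  have lg: "0 < - l * g" using assms by (simp add: mult_neg_pos)
  then have t1: "1 \<le> t" unfolding t_def by simp
  have "- l * g \<le> t" unfolding t_def by simp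
  also have "t \<le> t\<^sup>2" using t1 by (simp add: power2_eq_square)
  finally have "(- l * g) / t\<^sup>2 \<le> 1" using t1 by (subst divide_le_eq_1_pos) auto
  then have "d\<^sup>2 / (- l) * ((- l * g) / t\<^sup>2) \<le> d\<^sup>2 / (- l)"
    using assms(2) lg by (intro mult_left_le) (auto simp: divide_nonneg_neg)
  moreover have "g * (d / t)\<^sup>2 = d\<^sup>2 / (- l) * ((- l * g) / t\<^sup>2)"
    using assms t1 by (simp add: field_simps)
  ultimately show ?thesis unfolding t_def by simp
qed

section \<open>Stationary points of the reduced problem\<close>

text \<open>Stationarity of the Lagrangian \<open>\<parallel>w - w\<^sub>0\<parallel>\<^sup>2 - l \<cdot> red_con w\<close> with multiplier \<open>l\<close>.\<close>
definition red_stationary :: "nat \<Rightarrow> (nat \<Rightarrow> real) \<Rightarrow> (nat \<Rightarrow> real) \<Rightarrow> real \<Rightarrow> real \<Rightarrow> (nat \<Rightarrow> real) \<Rightarrow> bool" where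
  "red_stationary q \<gamma> \<delta> \<epsilon> l w \<longleftrightarrow> w 0 = l * \<epsilon> \<and> (\<forall>i\<in>{1..q}. (1 - l * \<gamma> i) * w i = \<delta> i)"

lemma red_obj_diff_stationary:
  assumes "red_con q \<gamma> \<epsilon> k w = 0" "red_con q \<gamma> \<epsilon> k v = 0" "red_stationary q \<gamma> \<delta> \<epsilon> l w"
  shows "red_obj q \<delta> v - red_obj q \<delta> w = (v 0 - w 0)\<^sup>2 + (\<Sum>i=1..q. (1 - l * \<gamma> i) * (v i - w i)\<^sup>2)"
proof -
  have "red_obj q \<delta> v - red_obj q \<delta> w
      = (red_obj q \<delta> v - l * red_con q \<gamma> \<epsilon> k v) - (red_obj q \<delta> w - l * red_con q \<gamma> \<epsilon> k w)"
    using assms(1,2) by simp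
  also have "\<dots> = ((v 0)\<^sup>2 - 2 * l * \<epsilon> * v 0 - ((w 0)\<^sup>2 - 2 * l * \<epsilon> * w 0)) +
      (\<Sum>i=1..q. ((v i - \<delta> i)\<^sup>2 - l * \<gamma> i * (v i)\<^sup>2) - ((w i - \<delta> i)\<^sup>2 - l * \<gamma> i * (w i)\<^sup>2))"
    by (simp add: red_obj_def red_con_def sum_subtractf sum_distrib_left sum.distrib algebra_simps)
  also have "\<dots> = (v 0 - w 0)\<^sup>2 + (\<Sum>i=1..q. (1 - l * \<gamma> i) * (v i - w i)\<^sup>2)"
  proof -
    have "(\<Sum>i=1..q. ((v i - \<delta> i)\<^sup>2 - l * \<gamma> i * (v i)\<^sup>2) - ((w i - \<delta> i)\<^sup>2 - l * \<gamma> i * (w i)\<^sup>2))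
        = (\<Sum>i=1..q. (1 - l * \<gamma> i) * (v i - w i)\<^sup>2)"
    proof (rule sum.cong)
      fix i assume "i \<in> {1..q}"
      then have d: "\<delta> i = (1 - l * \<gamma> i) * w i" using assms(3) unfolding red_stationary_def by auto
      show "((v i - \<delta> i)\<^sup>2 - l * \<gamma> i * (v i)\<^sup>2) - ((w i - \<delta> i)\<^sup>2 - l * \<gamma> i * (w i)\<^sup>2)
          = (1 - l * \<gamma> i) * (v i - w i)\<^sup>2"
        unfolding d by (simp add: power2_eq_square algebra_simps)
    qed simp
    moreover have "(v 0)\<^sup>2 - 2 * l * \<epsilon> * v 0 - ((w 0)\<^sup>2 - 2 * l * \<epsilon> * w 0) = (v 0 - w 0)\<^sup>2"
      using assms(3) unfolding red_stationary_def by (simp add: power2_eq_square algebra_simps)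
    ultimately show ?thesis by simp
  qed
  finally show ?thesis .
qed

lemma red_sol_stationary:
  assumes w: "red_feasible q m0 \<gamma> \<epsilon> k w" "red_stationary q \<gamma> \<delta> \<epsilon> l w"
    and nonneg: "\<forall>i\<in>{1..q}. 0 \<le> 1 - l * \<gamma> i"
  shows "red_sol q m0 \<gamma> \<delta> \<epsilon> k w"
    and "red_sol q m0 \<gamma> \<delta> \<epsilon> k v \<Longrightarrow> (i \<in> {1..q} \<Longrightarrow> 0 < 1 - l * \<gamma> i) \<Longrightarrow> v i = w i"
proof -
  have diff: "red_obj q \<delta> v - red_obj q \<delta> w = (v 0 - w 0)\<^sup>2 + (\<Sum>i=1..q. (1 - l * \<gamma> i) * (v i - w i)\<^sup>2)"
    if "red_feasible q m0 \<gamma> \<epsilon> k v" for v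
    using red_obj_diff_stationary[of q \<gamma> \<epsilon> k w v \<delta> l] w that unfolding red_feasible_def by auto
  have terms_nonneg: "i \<in> {1..q} \<Longrightarrow> 0 \<le> (1 - l * \<gamma> i) * (v i - w i)\<^sup>2" for v i
    using nonneg by auto
  then have sum_nonneg: "0 \<le> (\<Sum>i=1..q. (1 - l * \<gamma> i) * (v i - w i)\<^sup>2)" for v
    by (intro sum_nonneg) auto
  show "red_sol q m0 \<gamma> \<delta> \<epsilon> k w"
    unfolding red_sol_def using w(1) diff sum_nonneg by (smt (verit) zero_le_power2)
  assume v: "red_sol q m0 \<gamma> \<delta> \<epsilon> k v" and i: "i \<in> {1..q} \<Longrightarrow> 0 < 1 - l * \<gamma> i"
  then have vf: "red_feasible q m0 \<gamma> \<epsilon> k v" and "red_obj q \<delta> v \<le> red_obj q \<delta> w"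
    using w(1) unfolding red_sol_def by auto
  then have "(v 0 - w 0)\<^sup>2 + (\<Sum>i=1..q. (1 - l * \<gamma> i) * (v i - w i)\<^sup>2) \<le> 0"
    using diff[OF vf] by linarith
  then have v0: "(v 0 - w 0)\<^sup>2 = 0" and sum0: "(\<Sum>i=1..q. (1 - l * \<gamma> i) * (v i - w i)\<^sup>2) = 0"
    using sum_nonneg[of v] zero_le_power2[of "v 0 - w 0"] by linarith+
  have "(1 - l * \<gamma> i) * (v i - w i)\<^sup>2 = 0" if "i \<in> {1..q}"
    using sum0 sum_nonneg_eq_0_iff[of "{1..q}" "\<lambda>i. (1 - l * \<gamma> i) * (v i - w i)\<^sup>2"]
      terms_nonneg that by blast
  then have "i \<in> {1..q} \<Longrightarrow> v i = w i" using i by simp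
  moreover have "q < i \<Longrightarrow> v i = w i"
    using vf w(1) unfolding red_feasible_def red_vec_def by auto
  moreover have "v 0 = w 0" using v0 by simp
  ultimately show "v i = w i" by (cases "i = 0 \<or> q < i") auto
qed

lemma red_feasible_flip:
  assumes "red_feasible q m0 \<gamma> \<epsilon> k w" "p \<in> {1..q}"
  shows "red_feasible q m0 \<gamma> \<epsilon> k (w(p := - w p))"
proof -
  have "red_con q \<gamma> \<epsilon> k (w(p := - w p)) = red_con q \<gamma> \<epsilon> k w"
    unfolding red_con_def using assms(2) by (auto intro!: sum.cong)
  then show ?thesis using assms unfolding red_feasible_def red_vec_def by auto
qed

lemma red_sol_flip:
  assumes "red_sol q m0 \<gamma> \<delta> \<epsilon> k w" "p \<in> {1..q}" "\<delta> p = 0"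
  shows "red_sol q m0 \<gamma> \<delta> \<epsilon> k (w(p := - w p))"
proof -
  have "red_obj q \<delta> (w(p := - w p)) = red_obj q \<delta> w"
    unfolding red_obj_def using assms(2,3) by (auto intro!: sum.cong)
  then show ?thesis using assms red_feasible_flip unfolding red_sol_def by auto
qed

lemma red_sols_stationary_at_pole:
  assumes w: "red_feasible q m0 \<gamma> \<epsilon> k w" "red_stationary q \<gamma> \<delta> \<epsilon> l w"
    and p: "p \<in> {1..q}" "\<gamma> p \<noteq> 0" "1 - l * \<gamma> p = 0"
    and pos: "\<forall>i\<in>{1..q}. i \<noteq> p \<longrightarrow> 0 < 1 - l * \<gamma> i"
  shows "{v. red_sol q m0 \<gamma> \<delta> \<epsilon> k v} = {w, w(p := - w p)}"
proof (intro equalityI subsetI)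
  have nonneg: "\<forall>i\<in>{1..q}. 0 \<le> 1 - l * \<gamma> i" using pos p(3) by force
  note sol = red_sol_stationary[OF w nonneg]
  have "\<delta> p = 0" using w(2) p unfolding red_stationary_def by force
  then show "v \<in> {v. red_sol q m0 \<gamma> \<delta> \<epsilon> k v}" if "v \<in> {w, w(p := - w p)}" for v
    using that sol(1) red_sol_flip p(1) by auto
  fix v assume "v \<in> {v. red_sol q m0 \<gamma> \<delta> \<epsilon> k v}"
  then have v: "red_sol q m0 \<gamma> \<delta> \<epsilon> k v" by simp
  have eq: "i \<noteq> p \<Longrightarrow> v i = w i" for i using sol(2)[OF v] pos by blast
  have "red_con q \<gamma> \<epsilon> k v - red_con q \<gamma> \<epsilon> k w = (\<Sum>i=1..q. \<gamma> i * ((v i)\<^sup>2 - (w i)\<^sup>2))"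
    unfolding red_con_def using eq[of 0] p(1) by (simp add: sum_subtractf algebra_simps)
  also have "\<dots> = \<gamma> p * ((v p)\<^sup>2 - (w p)\<^sup>2)"
    using p(1) eq by (subst sum.remove[of _ p]) (auto intro!: sum.neutral)
  finally have "(v p)\<^sup>2 = (w p)\<^sup>2"
    using v w(1) p(2) unfolding red_sol_def red_feasible_def by simp
  then have "v p = w p \<or> v p = - w p" by (simp add: power2_eq_iff)
  then show "v \<in> {w, w(p := - w p)}" using eq by (metis fun_upd_apply ext insertI1 insertI2)
qed

section \<open>Dimension reduction\<close>

locale canonical_problem =
  fixes q :: nat and m :: "nat \<Rightarrow> nat" and \<gamma> \<delta> :: "nat \<Rightarrow> real" and \<epsilon> k :: real
  assumes q_pos: "1 \<le> q"
    and block_pos: "\<And>i. i \<in> {1..q} \<Longrightarrow> 1 \<le> m i"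
    and gamma_nonzero: "\<And>i. i \<in> {1..q} \<Longrightarrow> \<gamma> i \<noteq> 0"
    and gamma_decreasing: "\<And>i j. 1 \<le> i \<Longrightarrow> i < j \<Longrightarrow> j \<le> q \<Longrightarrow> \<gamma> j < \<gamma> i"
    and gamma_first_pos: "0 < \<gamma> 1"
    and delta_nonneg: "\<And>i. i \<in> {1..q} \<Longrightarrow> 0 \<le> \<delta> i"
    and eps_nonneg: "0 \<le> \<epsilon>"
    and eps_zero: "m 0 = 0 \<Longrightarrow> \<epsilon> = 0"
    and orig_feasible_exists: "\<exists>x. orig_feasible q m \<gamma> \<epsilon> k x"
    and regular: "m 0 = 0 \<or> (0 < m 0 \<and> 0 < \<epsilon>)"
begin

abbreviation "RS w \<equiv> red_sol q (m 0) \<gamma> \<delta> \<epsilon> k w"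
abbreviation "RF w \<equiv> red_feasible q (m 0) \<gamma> \<epsilon> k w"
abbreviation "OS x \<equiv> orig_sol q m \<gamma> \<delta> \<epsilon> k x"

definition "reduce_vec x = (\<lambda>i. if i = 0 then x 0 0 else if i \<le> q then sqrt (\<Sum>j<m i. (x i j)\<^sup>2) else 0)"
definition "embed_vec w = (\<lambda>i j. if i \<le> q \<and> j = 0 \<and> 0 < m i then w i else (0::real))"

lemma atMost_eq_insert_0: "{..q} = insert 0 {1..q}"
  by auto

lemma sum_sq_embed_vec: "i \<in> {1..q} \<Longrightarrow> (\<Sum>j<m i. (embed_vec w i j)\<^sup>2) = (w i)\<^sup>2"
  using block_pos[of i] sum_lessThan_eq_first[of "m i" "\<lambda>j. (embed_vec w i j)\<^sup>2"]
  unfolding embed_vec_def by auto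

lemma embed_vec_props:
  assumes "red_vec q (m 0) w"
  shows "orig_vec q m (embed_vec w)"
    and "orig_con q m \<gamma> \<epsilon> k (embed_vec w) = red_con q \<gamma> \<epsilon> k w"
    and "orig_obj q m \<delta> (embed_vec w) = red_obj q \<delta> w"
proof -
  have w0: "m 0 = 0 \<Longrightarrow> w 0 = 0" using assms unfolding red_vec_def by auto
  show "orig_vec q m (embed_vec w)" unfolding orig_vec_def embed_vec_def by auto
  have "\<epsilon> * embed_vec w 0 0 = \<epsilon> * w 0" using w0 unfolding embed_vec_def by auto
  then show "orig_con q m \<gamma> \<epsilon> k (embed_vec w) = red_con q \<gamma> \<epsilon> k w"
    unfolding orig_con_def red_con_def using sum_sq_embed_vec by (simp add: mult.assoc)
  have "(\<Sum>j<m 0. (embed_vec w 0 j - tstar \<delta> 0 j)\<^sup>2) = (w 0)\<^sup>2"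
    using w0 sum_lessThan_eq_first[of "m 0" "\<lambda>j. (embed_vec w 0 j - tstar \<delta> 0 j)\<^sup>2"]
    unfolding embed_vec_def tstar_def by (cases "m 0 = 0") auto
  moreover have "(\<Sum>j<m i. (embed_vec w i j - tstar \<delta> i j)\<^sup>2) = (w i - \<delta> i)\<^sup>2" if "i \<in> {1..q}" for i
    using that block_pos[of i] sum_lessThan_eq_first[of "m i" "\<lambda>j. (embed_vec w i j - tstar \<delta> i j)\<^sup>2"]
    unfolding embed_vec_def tstar_def by auto
  ultimately show "orig_obj q m \<delta> (embed_vec w) = red_obj q \<delta> w"
    unfolding orig_obj_def red_obj_def atMost_eq_insert_0 by simp
qed

lemma reduce_vec_props:
  assumes "orig_vec q m x"
  shows "red_vec q (m 0) (reduce_vec x)"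
    and "red_con q \<gamma> \<epsilon> k (reduce_vec x) = orig_con q m \<gamma> \<epsilon> k x"
proof -
  show "red_vec q (m 0) (reduce_vec x)"
    using assms unfolding orig_vec_def red_vec_def reduce_vec_def by auto
  show "red_con q \<gamma> \<epsilon> k (reduce_vec x) = orig_con q m \<gamma> \<epsilon> k x"
    unfolding red_con_def orig_con_def reduce_vec_def by (auto intro!: sum.cong simp: sum_nonneg)
qed

definition "orig_block_obj x i = (\<Sum>j<m i. (x i j - tstar \<delta> i j)\<^sup>2)"
definition "red_term w i = (if i = 0 then (w 0)\<^sup>2 else (w i - \<delta> i)\<^sup>2)"

lemma orig_obj_eq_sum_blocks: "orig_obj q m \<delta> x = (\<Sum>i\<le>q. orig_block_obj x i)"
  unfolding orig_obj_def orig_block_obj_def ..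

lemma red_obj_eq_sum_terms: "red_obj q \<delta> w = (\<Sum>i\<le>q. red_term w i)"
  unfolding red_obj_def red_term_def atMost_eq_insert_0 by simp

lemma red_term_reduce_vec_le:
  assumes "orig_vec q m x" "i \<le> q"
  shows "red_term (reduce_vec x) i \<le> orig_block_obj x i"
proof (cases "i = 0")
  case True
  show ?thesis
  proof (cases "m 0 = 0")
    case True
    then show ?thesis using assms(1) \<open>i = 0\<close>
      unfolding red_term_def orig_block_obj_def reduce_vec_def orig_vec_def by simp
  next
    case False
    then show ?thesis using \<open>i = 0\<close>
      unfolding red_term_def orig_block_obj_def reduce_vec_def tstar_def
      by (simp add: member_le_sum[of 0 "{..<m 0}" "\<lambda>j. (x 0 j)\<^sup>2"])
  qed
next
  case False
  then have "i \<in> {1..q}" using assms(2) by simp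
  then show ?thesis
    using sum_sq_diff_first_ge[of "m i" "\<delta> i" "x i"] block_pos[of i] delta_nonneg[of i] False
    unfolding red_term_def orig_block_obj_def reduce_vec_def tstar_def by auto
qed

lemma orig_block_eq_embed_reduce_vec:
  assumes "orig_vec q m x" "i \<le> q" "orig_block_obj x i = red_term (reduce_vec x) i"
    and "i = 0 \<or> 0 < \<delta> i"
  shows "x i j = embed_vec (reduce_vec x) i j"
proof -
  have outside: "m i \<le> j \<Longrightarrow> x i j = 0" using assms(1) unfolding orig_vec_def by auto
  consider "i = 0" "m 0 = 0" | "i = 0" "0 < m 0" | "i \<in> {1..q}" "0 < \<delta> i"
    using assms(2,4) by fastforce
  then show ?thesis
  proof cases
    case 1
    then show ?thesis using outside unfolding embed_vec_def by simp
  next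
    case 2
    then have "(\<Sum>j<m 0. (x 0 j)\<^sup>2) = (x 0 0)\<^sup>2"
      using assms(3) unfolding orig_block_obj_def red_term_def reduce_vec_def tstar_def by simp
    then have "j < m 0 \<Longrightarrow> j \<noteq> 0 \<Longrightarrow> x 0 j = 0"
      using sum_sq_eq_first_sq_imp_zero[of "m 0" "x 0" j] 2 by auto
    then show ?thesis using 2 outside unfolding embed_vec_def reduce_vec_def
      by (cases "j < m 0") auto
  next
    case 3
    then have "j < m i \<Longrightarrow> x i j = (if j = 0 then reduce_vec x i else 0)"
      using sum_sq_diff_first_eq_imp[of "m i" "\<delta> i" j "x i"] block_pos[of i] assms(3)
      unfolding orig_block_obj_def red_term_def reduce_vec_def tstar_def by auto
    then show ?thesis using 3 outside block_pos[of i] unfolding embed_vec_def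
      by (cases "j < m i") auto
  qed
qed

lemma red_obj_reduce_vec_le:
  "orig_vec q m x \<Longrightarrow> red_obj q \<delta> (reduce_vec x) \<le> orig_obj q m \<delta> x"
  unfolding orig_obj_eq_sum_blocks red_obj_eq_sum_terms
  by (intro sum_mono red_term_reduce_vec_le) auto

lemma orig_eq_embed_reduce_vec:
  assumes "orig_vec q m x" "orig_obj q m \<delta> x \<le> red_obj q \<delta> (reduce_vec x)"
    and "i = 0 \<or> (i \<in> {1..q} \<and> 0 < \<delta> i)"
  shows "x i j = embed_vec (reduce_vec x) i j"
proof -
  have "(\<Sum>i\<le>q. orig_block_obj x i - red_term (reduce_vec x) i) = 0"
    using assms(2) red_obj_reduce_vec_le[OF assms(1)]
    unfolding orig_obj_eq_sum_blocks red_obj_eq_sum_terms sum_subtractf by linarith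
  then have "\<forall>i\<le>q. orig_block_obj x i = red_term (reduce_vec x) i"
    using red_term_reduce_vec_le[OF assms(1)] by (subst (asm) sum_nonneg_eq_0_iff) auto
  then show ?thesis using orig_block_eq_embed_reduce_vec[OF assms(1)] assms(3) by auto
qed

lemma orig_sol_embed_vec:
  assumes "RS w"
  shows "OS (embed_vec w)"
proof -
  have wv: "red_vec q (m 0) w" and wc: "red_con q \<gamma> \<epsilon> k w = 0"
    using assms unfolding red_sol_def red_feasible_def by auto
  have "orig_obj q m \<delta> (embed_vec w) \<le> orig_obj q m \<delta> y" if "orig_feasible q m \<gamma> \<epsilon> k y" for y
  proof -
    have yv: "orig_vec q m y" and "orig_con q m \<gamma> \<epsilon> k y = 0"
      using that unfolding orig_feasible_def by auto
    then have "RF (reduce_vec y)" unfolding red_feasible_def using reduce_vec_props[OF yv] by simp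
    then have "red_obj q \<delta> w \<le> red_obj q \<delta> (reduce_vec y)" using assms unfolding red_sol_def by auto
    then show ?thesis using embed_vec_props(3)[OF wv] red_obj_reduce_vec_le[OF yv] by simp
  qed
  then show ?thesis
    unfolding orig_sol_def orig_feasible_def using embed_vec_props(1,2)[OF wv] wc by simp
qed

lemma red_sol_reduce_vec:
  assumes "RS w" "OS x"
  shows "RS (reduce_vec x)" and "orig_obj q m \<delta> x \<le> red_obj q \<delta> (reduce_vec x)"
proof -
  have wv: "red_vec q (m 0) w" using assms(1) unfolding red_sol_def red_feasible_def by auto
  have xv: "orig_vec q m x" and "orig_con q m \<gamma> \<epsilon> k x = 0"
    using assms(2) unfolding orig_sol_def orig_feasible_def by auto
  then have reduced_feasible: "RF (reduce_vec x)"
    unfolding red_feasible_def using reduce_vec_props[OF xv] by simp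
  have "orig_obj q m \<delta> x \<le> orig_obj q m \<delta> (embed_vec w)"
    using assms(2) orig_sol_embed_vec[OF assms(1)] unfolding orig_sol_def by auto
  also have "\<dots> = red_obj q \<delta> w" using embed_vec_props(3)[OF wv] .
  finally have x_le_w: "orig_obj q m \<delta> x \<le> red_obj q \<delta> w" .
  moreover have w_min: "red_obj q \<delta> w \<le> red_obj q \<delta> v" if "RF v" for v
    using assms(1) that unfolding red_sol_def by auto
  ultimately show "orig_obj q m \<delta> x \<le> red_obj q \<delta> (reduce_vec x)"
    using reduced_feasible by fastforce
  show "RS (reduce_vec x)"
    unfolding red_sol_def using reduced_feasible x_le_w w_min red_obj_reduce_vec_le[OF xv]
    by fastforce
qed

lemma orig_sol_eq_embed_vec:
  assumes "RS w" "OS x" "reduce_vec x i = w i" "i \<in> {1..q} \<Longrightarrow> \<delta> i = 0 \<Longrightarrow> w i = 0"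
  shows "x i j = embed_vec w i j"
proof -
  have xv: "orig_vec q m x" using assms(2) unfolding orig_sol_def orig_feasible_def by simp
  consider "q < i" | "i = 0 \<or> (i \<in> {1..q} \<and> 0 < \<delta> i)" | "i \<in> {1..q}" "\<delta> i = 0"
    using delta_nonneg[of i] by fastforce
  then show ?thesis
  proof cases
    case 1
    then show ?thesis using xv unfolding orig_vec_def embed_vec_def by auto
  next
    case 2
    then show ?thesis
      using orig_eq_embed_reduce_vec[OF xv red_sol_reduce_vec(2)[OF assms(1,2)]] assms(3)
      unfolding embed_vec_def by simp
  next
    case 3
    then have "(\<Sum>j<m i. (x i j)\<^sup>2) = 0"
      using assms(3,4) unfolding reduce_vec_def by auto
    then have "j < m i \<Longrightarrow> x i j = 0" by (subst (asm) sum_nonneg_eq_0_iff) auto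
    then show ?thesis using xv 3 assms(4) unfolding orig_vec_def embed_vec_def
      by (cases "j < m i") auto
  qed
qed

text \<open>If the zero coordinate \<open>w\<^sub>i\<close> were nonzero, flipping its sign would give another solution.\<close>
lemma red_sol_zero_if_delta_zero:
  assumes "RS w" "{v. RS v} \<subseteq> {w, w(p := - w p)}" "i \<in> {1..q}" "i \<noteq> p" "\<delta> i = 0"
  shows "w i = 0"
proof -
  have "w(i := - w i) \<in> {w, w(p := - w p)}"
    using red_sol_flip[OF assms(1,3,5)] assms(2) by auto
  then have "- w i = w i" using assms(4) by (metis fun_upd_apply insert_iff singletonD)
  then show ?thesis by simp
qed

lemma orig_unique_if_red_unique:
  assumes "\<exists>!w. RS w"
  shows "\<exists>!x. OS x"
proof -
  obtain w where w: "RS w" and unique: "\<And>v. RS v \<Longrightarrow> v = w" using assms by auto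
  have zero: "i \<in> {1..q} \<Longrightarrow> \<delta> i = 0 \<Longrightarrow> w i = 0" for i
    \<comment> \<open>with a unique solution the inclusion holds for every \<open>p\<close>; take \<open>p = 0 \<notin> {1..q}\<close>\<close>
    using red_sol_zero_if_delta_zero[OF w, of 0 i] unique by auto
  show ?thesis
  proof
    show "OS (embed_vec w)" using orig_sol_embed_vec[OF w] .
    fix x assume x: "OS x"
    have "reduce_vec x = w" using unique red_sol_reduce_vec(1)[OF w x] by simp
    then show "x = embed_vec w" using orig_sol_eq_embed_vec[OF w x] zero by (auto simp: fun_eq_iff)
  qed
qed

lemma orig_con_obj_eq_if_block_norm_eq:
  assumes "p \<in> {1..q}" "\<delta> p = 0" "\<forall>i j. i \<noteq> p \<longrightarrow> y i j = x i j"
    and "(\<Sum>j<m p. (y p j)\<^sup>2) = (\<Sum>j<m p. (x p j)\<^sup>2)"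
  shows "orig_con q m \<gamma> \<epsilon> k y = orig_con q m \<gamma> \<epsilon> k x" "orig_obj q m \<delta> y = orig_obj q m \<delta> x"
proof -
  have "(\<Sum>j<m i. (y i j)\<^sup>2) = (\<Sum>j<m i. (x i j)\<^sup>2)" for i
    using assms(3,4) by (cases "i = p") auto
  then show "orig_con q m \<gamma> \<epsilon> k y = orig_con q m \<gamma> \<epsilon> k x"
    unfolding orig_con_def using assms(1,3) by simp
  have "tstar \<delta> p j = 0" for j unfolding tstar_def using assms(2) by simp
  then have "(\<Sum>j<m i. (y i j - tstar \<delta> i j)\<^sup>2) = (\<Sum>j<m i. (x i j - tstar \<delta> i j)\<^sup>2)" for i
    using assms(3,4) by (cases "i = p") auto
  then show "orig_obj q m \<delta> y = orig_obj q m \<delta> x" unfolding orig_obj_def by simp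
qed

lemma orig_unique_up_to_block_if_red_sols_pair:
  assumes p: "p \<in> {1..q}" "\<delta> p = 0" and w: "RS w" "{v. RS v} = {w, w(p := - w p)}"
  shows "orig_unique_up_to_block q m \<gamma> \<delta> \<epsilon> k p"
  unfolding orig_unique_up_to_block_def
proof (intro exI conjI set_eqI iffI)
  show x: "OS (embed_vec w)" using orig_sol_embed_vec[OF w(1)] .
  have zero: "i \<in> {1..q} \<Longrightarrow> \<delta> i = 0 \<Longrightarrow> i \<noteq> p \<Longrightarrow> w i = 0" for i
    using red_sol_zero_if_delta_zero[OF w(1)] w(2) by blast
  fix y
  assume "y \<in> {y. OS y}"
  then have y: "OS y" by simp
  then have "reduce_vec y \<in> {w, w(p := - w p)}" using red_sol_reduce_vec(1)[OF w(1)] w(2) by auto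
  then have same: "i \<noteq> p \<Longrightarrow> reduce_vec y i = w i" and "(reduce_vec y p)\<^sup>2 = (w p)\<^sup>2" for i
    by auto
  then have "(\<Sum>j<m p. (y p j)\<^sup>2) = (\<Sum>j<m p. (embed_vec w p j)\<^sup>2)"
    using p(1) sum_sq_embed_vec[OF p(1)] unfolding reduce_vec_def by (auto simp: sum_nonneg)
  moreover have "\<forall>i j. i \<noteq> p \<longrightarrow> y i j = embed_vec w i j"
    using orig_sol_eq_embed_vec[OF w(1) y] same zero by blast
  moreover have "orig_vec q m y" using y unfolding orig_sol_def orig_feasible_def by simp
  ultimately show "y \<in> {y. orig_vec q m y \<and> (\<forall>i j. i \<noteq> p \<longrightarrow> y i j = embed_vec w i j) \<and>
      (\<Sum>j<m p. (y p j)\<^sup>2) = (\<Sum>j<m p. (embed_vec w p j)\<^sup>2)}" by simp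
next
  fix y
  assume "y \<in> {y. orig_vec q m y \<and> (\<forall>i j. i \<noteq> p \<longrightarrow> y i j = embed_vec w i j) \<and>
      (\<Sum>j<m p. (y p j)\<^sup>2) = (\<Sum>j<m p. (embed_vec w p j)\<^sup>2)}"
  then have "orig_vec q m y" and "orig_con q m \<gamma> \<epsilon> k y = orig_con q m \<gamma> \<epsilon> k (embed_vec w)"
    and "orig_obj q m \<delta> y = orig_obj q m \<delta> (embed_vec w)"
    using orig_con_obj_eq_if_block_norm_eq[OF p] by auto
  then show "y \<in> {y. OS y}"
    using orig_sol_embed_vec[OF w(1)] unfolding orig_sol_def orig_feasible_def by auto
qed

section \<open>The secular function\<close>

lemma gamma_le_first: "i \<in> {1..q} \<Longrightarrow> \<gamma> i \<le> \<gamma> 1"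
  using gamma_decreasing[of 1 i] by (cases "i = 1") auto

lemma gamma_ge_last: "i \<in> {1..q} \<Longrightarrow> \<gamma> q \<le> \<gamma> i"
  using gamma_decreasing[of i q] by (cases "i = q") auto

lemma gamma_inj: "i \<in> {1..q} \<Longrightarrow> p \<in> {1..q} \<Longrightarrow> i \<noteq> p \<Longrightarrow> \<gamma> i \<noteq> \<gamma> p"
  using gamma_decreasing[of i p] gamma_decreasing[of p i] by (cases "i < p") auto

lemma gamma_div_first_lt_1: "i \<in> {1..q} \<Longrightarrow> i \<noteq> 1 \<Longrightarrow> \<gamma> i / \<gamma> 1 < 1"
  using gamma_decreasing[of 1 i] gamma_first_pos by simp

lemma gamma_div_last_lt_1: "\<gamma> q < 0 \<Longrightarrow> i \<in> {1..q} \<Longrightarrow> i \<noteq> q \<Longrightarrow> \<gamma> i / \<gamma> q < 1"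
  using gamma_decreasing[of i q] by simp

text \<open>\<open>secular l\<close> is the constraint value at the stationary point with multiplier \<open>l\<close>;
  \<open>secular_except p\<close> drops the term that blows up at the pole \<open>l = 1/\<gamma>\<^sub>p\<close>.\<close>
definition "stationary_vec l = (\<lambda>i. if i = 0 then l * \<epsilon> else if i \<le> q then \<delta> i / (1 - l * \<gamma> i) else 0)"
definition "secular l = (\<Sum>i=1..q. \<gamma> i * (\<delta> i / (1 - l * \<gamma> i))\<^sup>2) + 2 * \<epsilon>\<^sup>2 * l - k"
definition "secular_except p l = (\<Sum>i\<in>{1..q} - {p}. \<gamma> i * (\<delta> i / (1 - l * \<gamma> i))\<^sup>2) + 2 * \<epsilon>\<^sup>2 * l - k"
definition "admissible l \<longleftrightarrow> (\<forall>i\<in>{1..q}. l * \<gamma> i < 1)"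

lemma red_vec_stationary_vec: "red_vec q (m 0) (stationary_vec l)"
  unfolding red_vec_def stationary_vec_def using eps_zero by auto

lemma red_con_stationary_vec: "red_con q \<gamma> \<epsilon> k (stationary_vec l) = secular l"
  unfolding red_con_def secular_def stationary_vec_def by (simp add: power2_eq_square)

lemma secular_split:
  "p \<in> {1..q} \<Longrightarrow> secular l = \<gamma> p * (\<delta> p)\<^sup>2 * inverse ((1 - l * \<gamma> p)\<^sup>2) + secular_except p l"
  unfolding secular_def secular_except_def
  by (subst sum.remove[of _ p]) (auto simp: power_mult_distrib power_inverse divide_inverse)

lemma f1_eq_secular_except: "f1 q \<gamma> \<delta> \<epsilon> k = secular_except 1 (1 / \<gamma> 1)"
proof -
  have "{2..q} = {1..q} - {1}" by auto
  then show ?thesis unfolding f1_def secular_except_def by (simp add: divide_inverse mult.commute)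
qed

lemma fq_eq_secular_except: "fq q \<gamma> \<delta> \<epsilon> k = secular_except q (1 / \<gamma> q)"
proof -
  have "{1..q-1} = {1..q} - {q}" using q_pos by auto
  then show ?thesis unfolding fq_def secular_except_def by (simp add: divide_inverse mult.commute)
qed

lemma admissible_iff: "admissible l \<longleftrightarrow> l * \<gamma> 1 < 1 \<and> l * \<gamma> q < 1"
proof
  show "admissible l \<Longrightarrow> l * \<gamma> 1 < 1 \<and> l * \<gamma> q < 1" using q_pos unfolding admissible_def by auto
  assume ends: "l * \<gamma> 1 < 1 \<and> l * \<gamma> q < 1"
  have "l * \<gamma> i < 1" if "i \<in> {1..q}" for i
  proof (cases "0 \<le> l")
    case True
    then have "l * \<gamma> i \<le> l * \<gamma> 1" using gamma_le_first[OF that] by (simp add: mult_left_mono)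
    then show ?thesis using ends by simp
  next
    case False
    then have "l * \<gamma> i \<le> l * \<gamma> q" using gamma_ge_last[OF that] by (simp add: mult_left_mono_neg)
    then show ?thesis using ends by simp
  qed
  then show "admissible l" unfolding admissible_def by blast
qed

lemma admissible_between:
  assumes "admissible l1" "admissible l2" "l1 \<le> l" "l \<le> l2"
  shows "admissible l"
proof -
  have "l * \<gamma> 1 \<le> l2 * \<gamma> 1" using assms(4) gamma_first_pos by (simp add: mult_right_mono)
  moreover have "l * \<gamma> q \<le> l1 * \<gamma> q \<or> l * \<gamma> q \<le> l2 * \<gamma> q"
  proof (cases "0 \<le> \<gamma> q")
    case True
    then show ?thesis using assms(4) mult_right_mono by blast
  next
    case False
    then show ?thesis using assms(3) mult_right_mono_neg[of l1 l "\<gamma> q"] by simp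
  qed
  ultimately show ?thesis using assms(1,2) unfolding admissible_iff by auto
qed

lemma red_unique_if_secular_root:
  assumes "admissible l" "secular l = 0"
  shows "\<exists>!w. RS w"
proof -
  have pos: "\<forall>i\<in>{1..q}. 0 < 1 - l * \<gamma> i" using assms(1) unfolding admissible_def by auto
  have "RF (stationary_vec l)"
    using red_vec_stationary_vec red_con_stationary_vec assms(2) unfolding red_feasible_def by simp
  moreover have "red_stationary q \<gamma> \<delta> \<epsilon> l (stationary_vec l)"
    using pos unfolding red_stationary_def stationary_vec_def by auto
  ultimately have sol: "RS (stationary_vec l)" and "RS v \<Longrightarrow> v i = stationary_vec l i" for v i
    using red_sol_stationary[of q "m 0"] pos less_imp_le by blast+
  then have "RS v \<Longrightarrow> v = stationary_vec l" for v by (simp add: fun_eq_iff)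
  with sol show ?thesis by blast
qed

lemma red_sols_at_pole:
  assumes p: "p \<in> {1..q}" "\<delta> p = 0" "\<forall>i\<in>{1..q}. i \<noteq> p \<longrightarrow> \<gamma> i / \<gamma> p < 1"
    and sign: "secular_except p (1 / \<gamma> p) / \<gamma> p \<le> 0"
  defines "w \<equiv> (stationary_vec (1 / \<gamma> p))(p := sqrt (- secular_except p (1 / \<gamma> p) / \<gamma> p))"
  shows "{v. RS v} = {w, w(p := - w p)}"
proof -
  let ?l = "1 / \<gamma> p"
  have gp: "\<gamma> p \<noteq> 0" using gamma_nonzero p(1) by auto
  have pos: "\<forall>i\<in>{1..q}. i \<noteq> p \<longrightarrow> 0 < 1 - ?l * \<gamma> i" using p(3) by simp
  have "red_con q \<gamma> \<epsilon> k w = \<gamma> p * (sqrt (- secular_except p ?l / \<gamma> p))\<^sup>2 + secular_except p ?l"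
    unfolding red_con_def secular_except_def w_def stationary_vec_def using p(1)
    by (subst sum.remove[of _ p]) (auto intro!: sum.cong simp: power2_eq_square)
  also have "\<dots> = 0" using sign gp by simp
  finally have "RF w"
    using red_vec_stationary_vec p(1) unfolding red_feasible_def red_vec_def w_def by auto
  moreover have "red_stationary q \<gamma> \<delta> \<epsilon> ?l w"
    using pos p(1,2) gp unfolding red_stationary_def w_def stationary_vec_def by auto
  ultimately show ?thesis using red_sols_stationary_at_pole p(1) gp pos by simp
qed

lemma unique_up_to_sign_at_pole:
  assumes p: "p \<in> {1..q}" "\<delta> p = 0" "\<forall>i\<in>{1..q}. i \<noteq> p \<longrightarrow> \<gamma> i / \<gamma> p < 1"
    and sign: "secular_except p (1 / \<gamma> p) / \<gamma> p < 0"
  shows "red_unique_up_to_sign q (m 0) \<gamma> \<delta> \<epsilon> k p \<and> orig_unique_up_to_block q m \<gamma> \<delta> \<epsilon> k p"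
proof -
  define w where "w = (stationary_vec (1 / \<gamma> p))(p := sqrt (- secular_except p (1 / \<gamma> p) / \<gamma> p))"
  have sols: "{v. RS v} = {w, w(p := - w p)}" using red_sols_at_pole[OF p] sign unfolding w_def by simp
  have "0 < - secular_except p (1 / \<gamma> p) / \<gamma> p"
    using sign by (simp only: minus_divide_left[symmetric] neg_0_less_iff_less)
  then have "w p \<noteq> 0" unfolding w_def by (metis fun_upd_same real_sqrt_gt_zero less_irrefl)
  then show ?thesis
    unfolding red_unique_up_to_sign_def
    using sols orig_unique_up_to_block_if_red_sols_pair[OF p(1,2) _ sols] by blast
qed

lemma red_unique_at_pole:
  assumes p: "p \<in> {1..q}" "\<delta> p = 0" "\<forall>i\<in>{1..q}. i \<noteq> p \<longrightarrow> \<gamma> i / \<gamma> p < 1"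
    and zero: "secular_except p (1 / \<gamma> p) = 0"
  shows "\<exists>!w. RS w"
proof -
  define w where "w = (stationary_vec (1 / \<gamma> p))(p := sqrt (- secular_except p (1 / \<gamma> p) / \<gamma> p))"
  have "w(p := - w p) = w" using zero unfolding w_def by simp
  then have "{v. RS v} = {w}" using red_sols_at_pole[OF p] zero unfolding w_def by simp
  then have "RS w" and "RS v \<Longrightarrow> v = w" for v by auto
  then show ?thesis by blast
qed

lemma red_not_unique_if_unique_up_to_sign:
  assumes "red_unique_up_to_sign q (m 0) \<gamma> \<delta> \<epsilon> k p"
  shows "\<not> (\<exists>!w. RS w)"
proof
  assume "\<exists>!w. RS w"
  moreover obtain w where "w p \<noteq> 0" "{v. RS v} = {w, w(p := - w p)}"
    using assms unfolding red_unique_up_to_sign_def by blast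
  ultimately have "w(p := - w p) = w" by blast
  then show False using \<open>w p \<noteq> 0\<close> by (metis fun_upd_same neg_equal_zero)
qed

lemma secular_root_between:
  assumes "admissible l1" "admissible l2" "secular l1 < 0" "0 < secular l2"
  shows "\<exists>l. admissible l \<and> secular l = 0"
proof -
  have cont: "continuous_on {a..b} secular" if "admissible a" "admissible b" for a b
  proof -
    have "\<forall>l\<in>{a..b}. \<forall>i\<in>{1..q}. 1 - l * \<gamma> i \<noteq> 0"
      using admissible_between[OF that] unfolding admissible_def by fastforce
    then show ?thesis unfolding secular_def by (intro continuous_intros) auto
  qed
  show ?thesis
  proof (cases "l1 \<le> l2")
    case True
    then obtain l where "l1 \<le> l" "l \<le> l2" "secular l = 0"
      using IVT'[of secular l1 0 l2] assms cont[OF assms(1,2)] by auto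
    then show ?thesis using admissible_between[OF assms(1,2)] by blast
  next
    case False
    then obtain l where "l2 \<le> l" "l \<le> l1" "secular l = 0"
      using IVT2'[of secular l1 0 l2] assms cont[OF assms(2,1)] by auto
    then show ?thesis using admissible_between[OF assms(2,1)] by blast
  qed
qed

lemma isCont_secular_except_pole: "p \<in> {1..q} \<Longrightarrow> isCont (secular_except p) (1 / \<gamma> p)"
  unfolding secular_except_def using gamma_inj gamma_nonzero
  by (intro continuous_intros) (auto simp: field_simps)

lemma pole_factor_at_right_0:
  assumes "p \<in> {1..q}"
  shows "filterlim (\<lambda>l. (1 - l * \<gamma> p)\<^sup>2) (at_right 0) (at (1 / \<gamma> p))"
proof (rule tendsto_imp_filterlim_at_right)
  have "\<gamma> p \<noteq> 0" using gamma_nonzero assms by simp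
  have "((\<lambda>l. (1 - l * \<gamma> p)\<^sup>2) \<longlongrightarrow> (1 - (1 / \<gamma> p) * \<gamma> p)\<^sup>2) (at (1 / \<gamma> p))"
    by (intro tendsto_intros)
  then show "((\<lambda>l. (1 - l * \<gamma> p)\<^sup>2) \<longlongrightarrow> 0) (at (1 / \<gamma> p))" using \<open>\<gamma> p \<noteq> 0\<close> by simp
  show "eventually (\<lambda>l. 0 < (1 - l * \<gamma> p)\<^sup>2) (at (1 / \<gamma> p))"
    unfolding eventually_at_filter using \<open>\<gamma> p \<noteq> 0\<close> by (auto simp: field_simps)
qed

text \<open>Near the pole the secular function blows up if \<open>\<delta>\<^sub>p \<noteq> 0\<close>, and otherwise tends to
  \<open>secular_except p (1/\<gamma>\<^sub>p)\<close>.\<close>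
lemma eventually_secular_pole_sign:
  assumes p: "p \<in> {1..q}" and F: "F \<le> at (1 / \<gamma> p)"
    and sign: "\<delta> p \<noteq> 0 \<or> 0 < \<gamma> p * secular_except p (1 / \<gamma> p)"
  shows "eventually (\<lambda>l. 0 < \<gamma> p * secular l) F"
proof -
  have lim: "((\<lambda>l. \<gamma> p * secular_except p l) \<longlongrightarrow> \<gamma> p * secular_except p (1 / \<gamma> p)) F"
    using tendsto_mono[OF F isCont_secular_except_pole[OF p, unfolded isCont_def]]
    by (intro tendsto_intros)
  have "\<gamma> p * secular l = (\<gamma> p)\<^sup>2 * (\<delta> p)\<^sup>2 * inverse ((1 - l * \<gamma> p)\<^sup>2) + \<gamma> p * secular_except p l" for l
    using secular_split[OF p] by (simp add: power2_eq_square algebra_simps)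
  moreover have "eventually (\<lambda>l. 0 < (\<gamma> p)\<^sup>2 * (\<delta> p)\<^sup>2 * inverse ((1 - l * \<gamma> p)\<^sup>2) + \<gamma> p * secular_except p l) F"
  proof (cases "\<delta> p = 0")
    case True
    then show ?thesis using sign order_tendstoD(1)[OF lim] by simp
  next
    case False
    then have "0 < (\<gamma> p)\<^sup>2 * (\<delta> p)\<^sup>2" using gamma_nonzero p by simp
    from filterlim_pos_mult_inverse_add_at_top[OF filterlim_mono[OF pole_factor_at_right_0[OF p] order_refl F] lim this]
    show ?thesis by (simp add: filterlim_at_top_dense)
  qed
  ultimately show ?thesis by simp
qed

lemma secular_pos_near_first_pole:
  assumes "\<delta> 1 \<noteq> 0 \<or> 0 < secular_except 1 (1 / \<gamma> 1)"
  shows "\<exists>l. admissible l \<and> 0 < secular l"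
proof -
  have p: "1 \<in> {1..q}" using q_pos by simp
  have "eventually (\<lambda>l. 0 < \<gamma> 1 * secular l) (at_left (1 / \<gamma> 1))"
    using eventually_secular_pole_sign[OF p at_le[OF subset_UNIV]] assms gamma_first_pos by simp
  moreover have "eventually (\<lambda>l. l \<in> {0<..<1 / \<gamma> 1}) (at_left (1 / \<gamma> 1))"
    using gamma_first_pos by (intro eventually_at_left_real) simp
  ultimately have "eventually (\<lambda>l. 0 < \<gamma> 1 * secular l \<and> l \<in> {0<..<1 / \<gamma> 1}) (at_left (1 / \<gamma> 1))"
    by (rule eventually_conj)
  then obtain l where "0 < \<gamma> 1 * secular l" "0 < l" "l < 1 / \<gamma> 1"
    using eventually_happens'[OF trivial_limit_at_left_real] by auto
  moreover have "l * \<gamma> 1 < 1" using \<open>l < 1 / \<gamma> 1\<close> gamma_first_pos by (simp add: pos_less_divide_eq)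
  moreover have "l * \<gamma> q \<le> l * \<gamma> 1"
    using \<open>0 < l\<close> gamma_le_first[of q] q_pos by (simp add: mult_left_mono)
  ultimately have "admissible l" unfolding admissible_iff by linarith
  moreover have "0 < secular l"
    using \<open>0 < \<gamma> 1 * secular l\<close> gamma_first_pos by (simp add: zero_less_mult_iff)
  ultimately show ?thesis by blast
qed

lemma secular_neg_near_last_pole:
  assumes "\<gamma> q < 0" "\<delta> q \<noteq> 0 \<or> secular_except q (1 / \<gamma> q) < 0"
  shows "\<exists>l. admissible l \<and> secular l < 0"
proof -
  have p: "q \<in> {1..q}" using q_pos by simp
  have "eventually (\<lambda>l. 0 < \<gamma> q * secular l) (at_right (1 / \<gamma> q))"
    using eventually_secular_pole_sign[OF p at_le[OF subset_UNIV]] assms by (auto simp: mult_neg_neg)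
  moreover have "eventually (\<lambda>l. l \<in> {1 / \<gamma> q<..<0}) (at_right (1 / \<gamma> q))"
    using assms(1) by (intro eventually_at_right_real) simp
  ultimately have "eventually (\<lambda>l. 0 < \<gamma> q * secular l \<and> l \<in> {1 / \<gamma> q<..<0}) (at_right (1 / \<gamma> q))"
    by (rule eventually_conj)
  then obtain l where "0 < \<gamma> q * secular l" "1 / \<gamma> q < l" "l < 0"
    using eventually_happens'[OF trivial_limit_at_right_real] by auto
  moreover have "l * \<gamma> 1 < 1" using mult_neg_pos[OF \<open>l < 0\<close> gamma_first_pos] by linarith
  moreover have "l * \<gamma> q < 1" using \<open>1 / \<gamma> q < l\<close> assms(1) by (simp add: neg_divide_less_eq)
  ultimately have "admissible l" unfolding admissible_iff by linarith
  moreover have "secular l < 0"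
    using \<open>0 < \<gamma> q * secular l\<close> assms(1) by (simp add: zero_less_mult_iff)
  ultimately show ?thesis by blast
qed

lemma secular_neg_far_left:
  assumes "0 < \<gamma> q" "0 < \<epsilon> \<or> 0 < k"
  shows "\<exists>l. admissible l \<and> secular l < 0"
proof -
  define D where "D = (\<Sum>i=1..q. (\<delta> i)\<^sup>2)"
  have "0 \<le> D" unfolding D_def by (simp add: sum_nonneg)
  have gamma_pos: "i \<in> {1..q} \<Longrightarrow> 0 < \<gamma> i" for i using gamma_ge_last assms(1) by force
  have bound: "secular l \<le> D / (- l) + 2 * \<epsilon>\<^sup>2 * l - k" if "l < 0" for l
  proof -
    have "(\<Sum>i=1..q. \<gamma> i * (\<delta> i / (1 - l * \<gamma> i))\<^sup>2) \<le> (\<Sum>i=1..q. (\<delta> i)\<^sup>2 / (- l))"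
      using pos_mult_sq_div_le[OF gamma_pos that] by (intro sum_mono) auto
    also have "\<dots> = D / (- l)" unfolding D_def by (simp only: sum_divide_distrib)
    finally show ?thesis unfolding secular_def by simp
  qed
  have admissible_neg: "admissible l" if "l < 0" for l
    using mult_neg_pos[OF that gamma_first_pos] mult_neg_pos[OF that assms(1)]
    unfolding admissible_iff by linarith
  consider "0 < k" | "k \<le> 0" "0 < \<epsilon>" using assms(2) by linarith
  then show ?thesis
  proof cases
    case 1
    define l where "l = - (D + 1) / k"
    have "l < 0" unfolding l_def using \<open>0 \<le> D\<close> 1 by (simp add: divide_neg_pos)
    have "D / (- l) = D * k / (D + 1)" unfolding l_def using \<open>0 \<le> D\<close> 1 by (simp add: field_simps)
    also have "\<dots> < k" using \<open>0 \<le> D\<close> 1 by (simp add: field_simps)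
    moreover have "2 * \<epsilon>\<^sup>2 * l \<le> 0" using \<open>l < 0\<close> by (simp add: mult_nonneg_nonpos)
    ultimately have "secular l < 0" using bound[OF \<open>l < 0\<close>] by linarith
    then show ?thesis using admissible_neg \<open>l < 0\<close> by blast
  next
    case 2
    define A where "A = (D - k + 1) / (2 * \<epsilon>\<^sup>2)"
    define l where "l = - A - 1"
    have "0 < 2 * \<epsilon>\<^sup>2" using 2 by simp
    have "0 \<le> A" unfolding A_def using \<open>0 \<le> D\<close> 2 by simp
    then have "l \<le> -1" unfolding l_def by linarith
    then have "D / (- l) \<le> D / 1" using \<open>0 \<le> D\<close> by (intro divide_left_mono) auto
    then have "D / (- l) \<le> D" by (simp only: div_by_1)
    moreover have "2 * \<epsilon>\<^sup>2 * l = - (D - k + 1) - 2 * \<epsilon>\<^sup>2"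
      unfolding l_def A_def using \<open>0 < 2 * \<epsilon>\<^sup>2\<close> by (simp add: field_simps)
    moreover have "l < 0" using \<open>l \<le> -1\<close> by simp
    ultimately have "secular l < 0" using bound[OF \<open>l < 0\<close>] \<open>0 < 2 * \<epsilon>\<^sup>2\<close> by linarith
    then show ?thesis using admissible_neg \<open>l < 0\<close> by blast
  qed
qed

text \<open>This is where feasibility and regularity enter: with \<open>\<epsilon> = 0\<close> we get \<open>m\<^sub>0 = 0\<close>, and a
  feasible point forces \<open>k \<ge> 0\<close> when all \<open>\<gamma>\<^sub>i > 0\<close>; \<open>k = 0\<close> is excluded by single-Lagrangianity.\<close>
lemma eps_pos_or_k_pos:
  assumes "0 < \<gamma> q" "singly_lagrangian q (m 0) \<gamma> \<delta> k"
  shows "0 < \<epsilon> \<or> 0 < k"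
proof (rule ccontr)
  assume "\<not> (0 < \<epsilon> \<or> 0 < k)"
  then have "\<epsilon> = 0" and "k \<le> 0" using eps_nonneg by auto
  then have "m 0 = 0" using regular by auto
  obtain x where "orig_feasible q m \<gamma> \<epsilon> k x" using orig_feasible_exists by blast
  then have "k = (\<Sum>i=1..q. \<gamma> i * (\<Sum>j<m i. (x i j)\<^sup>2))"
    using \<open>\<epsilon> = 0\<close> unfolding orig_feasible_def orig_con_def by simp
  also have "\<dots> \<ge> 0"
  proof (intro sum_nonneg mult_nonneg_nonneg)
    show "0 \<le> \<gamma> i" if "i \<in> {1..q}" for i using gamma_ge_last[OF that] assms(1) by simp
  qed (simp add: sum_nonneg)
  finally have "k = 0" using \<open>k \<le> 0\<close> by simp
  then show False
    using assms \<open>m 0 = 0\<close>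
    unfolding singly_lagrangian_def non_lagrangian_def multiply_lagrangian_def by auto
qed

lemma red_unique_if_multiply_lagrangian:
  assumes "multiply_lagrangian q (m 0) \<delta> k"
  shows "\<exists>!w. RS w"
proof -
  have "secular 0 = 0" using assms unfolding multiply_lagrangian_def secular_def by simp
  moreover have "admissible 0" unfolding admissible_def by simp
  ultimately show ?thesis using red_unique_if_secular_root by blast
qed

text \<open>Here the feasible set itself is \<open>{0}\<close>.\<close>
lemma red_unique_if_non_lagrangian:
  assumes "non_lagrangian q (m 0) \<gamma> \<delta> k"
  shows "\<exists>!w. RS w"
proof -
  have "m 0 = 0" and "k = 0" and "0 < \<gamma> q" using assms unfolding non_lagrangian_def by auto
  then have "\<epsilon> = 0" using eps_zero by simp
  have gamma_pos: "i \<in> {1..q} \<Longrightarrow> 0 < \<gamma> i" for i using gamma_ge_last \<open>0 < \<gamma> q\<close> by force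
  have only_zero: "v = (\<lambda>_. 0)" if "RF v" for v
  proof -
    have "(\<Sum>i=1..q. \<gamma> i * (v i)\<^sup>2) = 0"
      using that \<open>\<epsilon> = 0\<close> \<open>k = 0\<close> unfolding red_feasible_def red_con_def by simp
    moreover have "\<forall>i\<in>{1..q}. 0 \<le> \<gamma> i * (v i)\<^sup>2"
    proof
      show "0 \<le> \<gamma> i * (v i)\<^sup>2" if "i \<in> {1..q}" for i using gamma_pos[OF that] by simp
    qed
    ultimately have zero: "\<forall>i\<in>{1..q}. \<gamma> i * (v i)\<^sup>2 = 0" using sum_nonneg_eq_0_iff[of "{1..q}" "\<lambda>i. \<gamma> i * (v i)\<^sup>2"] by simp
    have "v i = 0" for i
    proof (cases "i \<in> {1..q}")
      case True
      then have "\<gamma> i * (v i)\<^sup>2 = 0" and "0 < \<gamma> i" using zero gamma_pos by blast+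
      then show ?thesis by simp
    next
      case False
      then have "i = 0 \<or> q < i" by auto
      then show ?thesis using that \<open>m 0 = 0\<close> unfolding red_feasible_def red_vec_def by blast
    qed
    then show ?thesis by auto
  qed
  have "RF (\<lambda>_. 0)" unfolding red_feasible_def red_vec_def red_con_def using \<open>k = 0\<close> by simp
  then have "RS (\<lambda>_. 0)" unfolding red_sol_def using only_zero by blast
  moreover have "RS v \<Longrightarrow> v = (\<lambda>_. 0)" for v using only_zero unfolding red_sol_def by blast
  ultimately show ?thesis by blast
qed

lemma secular_root_exists:
  assumes "singly_lagrangian q (m 0) \<gamma> \<delta> k"
    and "\<delta> 1 \<noteq> 0 \<or> 0 < secular_except 1 (1 / \<gamma> 1)"
    and "\<gamma> q < 0 \<Longrightarrow> \<delta> q \<noteq> 0 \<or> secular_except q (1 / \<gamma> q) < 0"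
  shows "\<exists>l. admissible l \<and> secular l = 0"
proof -
  obtain l2 where l2: "admissible l2" "0 < secular l2"
    using secular_pos_near_first_pole[OF assms(2)] by blast
  have "\<exists>l. admissible l \<and> secular l < 0"
  proof (cases "\<gamma> q < 0")
    case True
    show ?thesis using secular_neg_near_last_pole[OF True assms(3)[OF True]] .
  next
    case False
    then have "0 < \<gamma> q" using gamma_nonzero[of q] q_pos by simp
    then show ?thesis using secular_neg_far_left eps_pos_or_k_pos[OF _ assms(1)] by blast
  qed
  then obtain l1 where l1: "admissible l1" "secular l1 < 0" by blast
  show ?thesis using secular_root_between[OF l1(1) l2(1) l1(2) l2(2)] .
qed

lemma red_unique_unless_exceptional:
  assumes "\<not> (singly_lagrangian q (m 0) \<gamma> \<delta> k \<and>
      ((f1 q \<gamma> \<delta> \<epsilon> k < 0 \<and> \<delta> 1 = 0) \<or> (\<gamma> q < 0 \<and> 0 < fq q \<gamma> \<delta> \<epsilon> k \<and> \<delta> q = 0)))"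
  shows "\<exists>!w. RS w"
proof -
  have first: "1 \<in> {1..q}" and last: "q \<in> {1..q}" using q_pos by auto
  consider "multiply_lagrangian q (m 0) \<delta> k" | "non_lagrangian q (m 0) \<gamma> \<delta> k"
    | "\<delta> 1 = 0" "secular_except 1 (1 / \<gamma> 1) = 0"
    | "\<gamma> q < 0" "\<delta> q = 0" "secular_except q (1 / \<gamma> q) = 0"
    | "\<exists>l. admissible l \<and> secular l = 0"
  proof (cases "singly_lagrangian q (m 0) \<gamma> \<delta> k")
    case False
    then show ?thesis using that unfolding singly_lagrangian_def by blast
  next
    case True
    then have "\<not> (secular_except 1 (1 / \<gamma> 1) < 0 \<and> \<delta> 1 = 0)"
      and "\<not> (\<gamma> q < 0 \<and> 0 < secular_except q (1 / \<gamma> q) \<and> \<delta> q = 0)"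
      using assms unfolding f1_eq_secular_except fq_eq_secular_except by auto
    then show ?thesis using that secular_root_exists[OF True] by fastforce
  qed
  then show ?thesis
  proof cases
    case 1
    then show ?thesis by (rule red_unique_if_multiply_lagrangian)
  next
    case 2
    then show ?thesis by (rule red_unique_if_non_lagrangian)
  next
    case 3
    then show ?thesis using red_unique_at_pole[OF first] gamma_div_first_lt_1 by blast
  next
    case 4
    then show ?thesis using red_unique_at_pole[OF last] gamma_div_last_lt_1 by blast
  next
    case 5
    then show ?thesis using red_unique_if_secular_root by blast
  qed
qed

end

theorem corollary8p1:
  fixes q :: nat and m :: "nat \<Rightarrow> nat" and \<gamma> \<delta> :: "nat \<Rightarrow> real" and \<epsilon> k :: real
  assumes "canonical_form q m \<gamma> \<delta> \<epsilon> k"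
    and "regular (m 0) \<epsilon>"
  shows "((\<exists>!w. red_sol q (m 0) \<gamma> \<delta> \<epsilon> k w) \<longrightarrow> (\<exists>!x. orig_sol q m \<gamma> \<delta> \<epsilon> k x))
    \<and> ((\<not> (\<exists>!w. red_sol q (m 0) \<gamma> \<delta> \<epsilon> k w)) \<longleftrightarrow>
         singly_lagrangian q (m 0) \<gamma> \<delta> k \<and>
         ((f1 q \<gamma> \<delta> \<epsilon> k < 0 \<and> \<delta> 1 = 0) \<or>
          (\<gamma> q < 0 \<and> 0 < fq q \<gamma> \<delta> \<epsilon> k \<and> \<delta> q = 0)))
    \<and> (singly_lagrangian q (m 0) \<gamma> \<delta> k \<and> f1 q \<gamma> \<delta> \<epsilon> k < 0 \<and> \<delta> 1 = 0 \<longrightarrow>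
         red_unique_up_to_sign q (m 0) \<gamma> \<delta> \<epsilon> k 1 \<and> orig_unique_up_to_block q m \<gamma> \<delta> \<epsilon> k 1)
    \<and> (singly_lagrangian q (m 0) \<gamma> \<delta> k \<and> \<gamma> q < 0 \<and> 0 < fq q \<gamma> \<delta> \<epsilon> k \<and> \<delta> q = 0 \<longrightarrow>
         red_unique_up_to_sign q (m 0) \<gamma> \<delta> \<epsilon> k q \<and> orig_unique_up_to_block q m \<gamma> \<delta> \<epsilon> k q)"
proof -
  interpret canonical_problem q m \<gamma> \<delta> \<epsilon> k
    using assms unfolding canonical_form_def regular_def by unfold_locales auto
  have first: "f1 q \<gamma> \<delta> \<epsilon> k < 0 \<and> \<delta> 1 = 0 \<Longrightarrow>
      red_unique_up_to_sign q (m 0) \<gamma> \<delta> \<epsilon> k 1 \<and> orig_unique_up_to_block q m \<gamma> \<delta> \<epsilon> k 1"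
    using unique_up_to_sign_at_pole[of 1] q_pos gamma_div_first_lt_1 gamma_first_pos
    unfolding f1_eq_secular_except by (simp add: divide_neg_pos)
  have last: "\<gamma> q < 0 \<and> 0 < fq q \<gamma> \<delta> \<epsilon> k \<and> \<delta> q = 0 \<Longrightarrow>
      red_unique_up_to_sign q (m 0) \<gamma> \<delta> \<epsilon> k q \<and> orig_unique_up_to_block q m \<gamma> \<delta> \<epsilon> k q"
    using unique_up_to_sign_at_pole[of q] q_pos gamma_div_last_lt_1
    unfolding fq_eq_secular_except by (simp add: divide_pos_neg)
  show ?thesis
    using orig_unique_if_red_unique red_unique_unless_exceptional first last
      red_not_unique_if_unique_up_to_sign by blast
qed

end
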